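(* Let $m\geq 5$ be a square-free integer with $m\equiv 1\pmod 4$, and let $K=\mathbb{Q}(\sqrt m)$. Then: if $\lfloor\sqrt m\rfloor$ is an even integer greater than $2$, then $U_K=\{1\}\subset\mathcal{F}_K=\{1,\ \tfrac{-3+\lfloor\sqrt m\rfloor+\sqrt m}{2},\ 1+\min T_K\}$ with $\tfrac{-3+\lfloor\sqrt m\rfloor+\sqrt m}{2}=\min T_K$; if $m=5$, then $U_K=\mathcal{F}_K=\{\tfrac{-1+\sqrt5}{2}=2\cos(2\pi/5),\ 1,\ \tfrac{1+\sqrt5}{2}=2\cos(2\pi/10)\}$; if $\lfloor\sqrt m\rfloor$ is odd, then $U_K=\{1\}\subset\mathcal{F}_K=\{1,\ \tfrac{-2+\lfloor\sqrt m\rfloor+\sqrt m}{2},\ 1+\min T_K\}$ with $\tfrac{-2+\lfloor\sqrt m\rfloor+\sqrt m}{2}=\min T_K$.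
   Context: For a real number field $K$, $\wp_K$ is the set of Pisot numbers $\theta\in K$ (real algebraic integers $>1$ whose other conjugates have modulus $<1$) with $\mathbb{Q}(\theta)=K$, enumerated $\theta_1<\theta_2<\cdots$; $\mathcal{F}_K:=\{\theta_{n+1}-\theta_n\mid n\in\mathbb{N}\}$. $U_K$ is the set of root of unity trace numbers in $K$, i.e. positive algebraic integers of the form $2\cos(2k\pi/n)$ with $n\geq4$, $1\leq k\leq n-1$, $\gcd(k,n)=1$, lying in $K$. $T_K$ is the set of algebraic integers $\beta\in K$ with $\beta>2$ whose conjugate $\beta'$ (image under the nontrivial embedding of $K$) lies in $(-2,2)$, $\beta'\neq0$. *)

theory Defs
  imports "HOL-Analysis.Analysis" "HOL-Computational_Algebra.Computational_Algebra"
begin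

definition QK :: "int \<Rightarrow> real set" where
  "QK m = {of_rat a + of_rat b * sqrt (real_of_int m) | a b. True}"

definition qconj :: "int \<Rightarrow> real \<Rightarrow> real" where
  "qconj m x = (THE y. \<exists>a b. x = of_rat a + of_rat b * sqrt (real_of_int m)
                           \<and> y = of_rat a - of_rat b * sqrt (real_of_int m))"

definition gen_field :: "real \<Rightarrow> real set" where
  "gen_field t = {poly (map_poly of_rat p) t / poly (map_poly of_rat q) t | p q.
                    poly (map_poly of_rat q) t \<noteq> 0}"

definition alg_int :: "'a :: field_char_0 \<Rightarrow> bool" where
  "alg_int x \<longleftrightarrow> (\<exists>p :: int poly. lead_coeff p = 1 \<and> poly (map_poly of_int p) x = 0)"

definition pisot :: "real \<Rightarrow> bool" where
  "pisot t \<longleftrightarrow> alg_int t \<and> t > 1 \<and>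
     (\<exists>p :: rat poly. irreducible p \<and> poly (map_poly of_rat p) (complex_of_real t) = 0 \<and>
        (\<forall>z. poly (map_poly of_rat p) z = 0 \<and> z \<noteq> complex_of_real t \<longrightarrow> cmod z < 1))"

definition pisotK :: "int \<Rightarrow> real set" where
  "pisotK m = {t. pisot t \<and> t \<in> QK m \<and> gen_field t = QK m}"

definition pisot_enum :: "int \<Rightarrow> nat \<Rightarrow> real" where
  "pisot_enum m = (THE f. strict_mono f \<and> range f = pisotK m)"

definition FK :: "int \<Rightarrow> real set" where
  "FK m = {pisot_enum m (Suc n) - pisot_enum m n | n. True}"

definition UK :: "int \<Rightarrow> real set" where
  "UK m = {x. x > 0 \<and> alg_int x \<and> x \<in> QK m \<and>
     (\<exists>n k :: nat. n \<ge> 4 \<and> 1 \<le> k \<and> k \<le> n - 1 \<and> coprime k n \<and>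
        x = 2 * cos (2 * real k * pi / real n))}"

definition TK :: "int \<Rightarrow> real set" where
  "TK m = {b. b \<in> QK m \<and> alg_int b \<and> b > 2 \<and>
     -2 < qconj m b \<and> qconj m b < 2 \<and> qconj m b \<noteq> 0}"

end

theory Submission
  imports Defs
begin

text \<open>
  The ring of integers of \<open>K = \<rat>(\<surd>m)\<close> is \<open>\<int>[\<omega>]\<close> with \<open>\<omega> = (1 + \<surd>m) / 2\<close>, and the
  conjugate of \<open>x + y\<omega>\<close> is \<open>x - y\<gamma>\<close> with \<open>\<gamma> = (\<surd>m - 1) / 2\<close>. Hence the Pisot numbers
  generating \<open>K\<close> are the \<open>x + y\<omega>\<close> with \<open>y \<ge> 1\<close> and \<open>\<bar>x - y\<gamma>\<bar> < 1\<close>, i.e.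
  \<open>x \<in> {\<lfloor>y\<gamma>\<rfloor>, \<lfloor>y\<gamma>\<rfloor> + 1}\<close>. Listed by increasing \<open>y\<close>, consecutive ones differ either
  by \<open>1\<close> or by \<open>\<gamma> + \<lfloor>(y + 1)\<gamma>\<rfloor> - \<lfloor>y\<gamma>\<rfloor>\<close>, and since \<open>\<gamma>\<close> is irrational the floor
  difference takes both values \<open>\<lfloor>\<gamma>\<rfloor>\<close> and \<open>\<lfloor>\<gamma>\<rfloor> + 1\<close>. The same description of the
  integers shows that \<open>\<gamma> + \<lfloor>\<gamma>\<rfloor> = \<lfloor>\<gamma>\<rfloor> - 1 + \<omega>\<close> is the least element of \<open>T\<^sub>K\<close> once
  \<open>\<surd>m > 3\<close>. Finally, if \<open>x = 2 cos (2\<pi>k/n)\<close> lies in \<open>K\<close>, then \<open>D\<^sub>n(x) = 2\<close> for the Dickson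
  polynomial \<open>D\<^sub>n(2 cos t) = 2 cos (nt)\<close>; as \<open>D\<^sub>n\<close> has integer coefficients, also
  \<open>D\<^sub>n(x') = 2\<close>, which forces \<open>\<bar>x'\<bar> \<le> 2\<close>. Together with \<open>0 < x < 2\<close> this leaves only \<open>x = 1\<close>,
  and \<open>x \<in> {\<omega> - 1, \<omega>}\<close> when \<open>m = 5\<close>.
\<close>

section \<open>Integral polynomials and algebraic integers\<close>

lemma map_poly_of_rat_add:
  "map_poly (of_rat :: rat \<Rightarrow> 'a::field_char_0) (p + q) = map_poly of_rat p + map_poly of_rat q"
  by (rule poly_eqI) (simp add: coeff_map_poly of_rat_add)

lemma map_poly_of_rat_mult:
  "map_poly (of_rat :: rat \<Rightarrow> 'a::field_char_0) (p * q) = map_poly of_rat p * map_poly of_rat q"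
  by (rule poly_eqI) (simp add: coeff_map_poly coeff_mult of_rat_sum of_rat_mult)

lemma map_poly_of_int_mult:
  "map_poly (of_int :: int \<Rightarrow> 'a::comm_ring_1) (p * q) = map_poly of_int p * map_poly of_int q"
  by (rule poly_eqI) (simp add: coeff_map_poly coeff_mult)

lemma map_poly_of_int_eq_iff [simp]:
  "map_poly (of_int :: int \<Rightarrow> 'a::ring_char_0) p = map_poly of_int q \<longleftrightarrow> p = q"
  by (metis coeff_map_poly of_int_0 of_int_eq_iff poly_eqI)

lemma poly_map_poly_of_rat_of_rat:
  "poly (map_poly (of_rat :: rat \<Rightarrow> 'a::field_char_0) p) (of_rat q) = of_rat (poly p q)"
  by (induction p) (simp_all add: map_poly_pCons of_rat_add of_rat_mult)

lemma poly_map_poly_of_rat_of_real: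
  "poly (map_poly of_rat p) (of_real x :: 'a::real_field) = of_real (poly (map_poly of_rat p) x)"
proof -
  have "(of_real (of_rat a) :: 'a) = of_rat a" for a
    by (cases a) (simp add: Fract_of_int_quotient of_rat_divide)
  then show ?thesis
    by (induction p) (simp_all add: map_poly_pCons)
qed

lemma alg_int_iff_algebraic_int: "alg_int x \<longleftrightarrow> algebraic_int x"
  unfolding alg_int_def algebraic_int_altdef_ipoly by blast

lemma rat_poly_common_denominator:
  fixes q :: "rat poly"
  obtains d :: int and h where "d > 0" "map_poly of_int h = smult (of_int d) q"
proof (induction q arbitrary: thesis)
  case 0
  show ?case by (rule 0[of 1 0]) simp_all
next
  case (pCons a q)
  obtain d h where dh: "d > 0" "map_poly of_int h = smult (of_int d) q"
    using pCons.IH by blast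
  obtain n e where "quotient_of a = (n, e)" by (cases "quotient_of a")
  then have a: "a = of_int n / of_int e" and "e > 0"
    by (auto intro: quotient_of_div quotient_of_denom_pos)
  show ?case
    by (rule pCons.prems[of "d * e" "pCons (n * d) (smult e h)"])
      (use dh \<open>e > 0\<close> in \<open>simp_all add: map_poly_pCons map_poly_smult a mult_ac\<close>)
qed

lemma monic_factor_of_monic_int_poly_integral:
  fixes p :: "int poly" and f g :: "rat poly"
  assumes fg: "map_poly of_int p = f * g" and p: "lead_coeff p = 1" and f: "lead_coeff f = 1"
  shows "coeff f i \<in> \<int>"
proof -
  have g: "lead_coeff g = 1"
    using arg_cong[OF fg, of lead_coeff] p f by (simp add: degree_map_poly coeff_map_poly lead_coeff_mult)
  obtain d f' where d: "d > 0" and f': "map_poly of_int f' = smult (of_int d) f"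
    by (rule rat_poly_common_denominator)
  obtain e g' where e: "e > 0" and g': "map_poly of_int g' = smult (of_int e) g"
    by (rule rat_poly_common_denominator)
  have "map_poly of_int (f' * g') = (map_poly of_int (smult (d * e) p) :: rat poly)"
    by (simp add: map_poly_of_int_mult map_poly_smult f' g' fg mult_ac)
  then have "content (f' * g') = content (smult (d * e) p)"
    by simp
  moreover have "content p = 1"
    using content_dvd_coeff[of p "degree p"] p normalize_content[of p]
    by (simp add: normalize_int_def zdvd1_eq)
  ultimately have prod: "content f' * content g' = d * e"
    using d e by (simp add: content_mult normalize_int_def abs_mult)
  have "coeff f' (degree f) = d" and "coeff g' (degree g) = e"
    using arg_cong[OF f', of "\<lambda>u. coeff u (degree f)"] arg_cong[OF g', of "\<lambda>u. coeff u (degree g)"] f g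
    by (simp_all add: coeff_map_poly)
  then have "content f' dvd d" and "content g' dvd e"
    by (metis content_dvd_coeff)+
  moreover have "content f' \<ge> 0"
    by (metis abs_ge_zero normalize_content normalize_int_def)
  ultimately have "d * e \<le> content f' * e"
    using prod e by (metis mult_left_mono zdvd_imp_le)
  then have "content f' = d"
    using \<open>content f' dvd d\<close> d e zdvd_imp_le[of "content f'" d] by simp
  then obtain k where "coeff f' i = d * k"
    by (metis content_dvd_coeff dvdE)
  moreover have "of_int (coeff f' i) = of_int d * coeff f i"
    using arg_cong[OF f', of "\<lambda>u. coeff u i"] by (simp add: coeff_map_poly)
  ultimately have "coeff f i = of_int k"
    using d by simp
  then show ?thesis
    by simp
qed

lemma algebraic_int_min_poly_integral:
  fixes x :: "'a::field_char_0" and f :: "rat poly"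
  assumes x: "algebraic_int x" and f: "lead_coeff f = 1" "poly (map_poly of_rat f) x = 0"
    and minimal: "\<And>g. degree g < degree f \<Longrightarrow> poly (map_poly of_rat g) x = 0 \<Longrightarrow> g = 0"
  shows "coeff f i \<in> \<int>"
proof -
  obtain p where p: "poly (map_poly of_int p) x = 0" "lead_coeff p = 1"
    using x by (auto simp: algebraic_int_altdef_ipoly)
  define P :: "rat poly" where "P = map_poly of_int p"
  have "f \<noteq> 0"
    using f by auto
  have "poly (map_poly of_rat P) x = 0"
    using p by (simp add: P_def map_poly_map_poly o_def)
  moreover have "poly (map_poly of_rat P) x =
      poly (map_poly of_rat (P div f)) x * poly (map_poly of_rat f) x + poly (map_poly of_rat (P mod f)) x"
    by (subst div_mult_mod_eq[of P f, symmetric]) (simp only: map_poly_of_rat_add map_poly_of_rat_mult poly_add poly_mult)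
  ultimately have "poly (map_poly of_rat (P mod f)) x = 0"
    using f(2) by simp
  then have "P mod f = 0"
    using minimal degree_mod_less[OF \<open>f \<noteq> 0\<close>, of P] by blast
  then have "map_poly of_int p = f * (P div f)"
    using div_mult_mod_eq[of P f] by (simp add: P_def mult.commute)
  then show ?thesis
    using p(2) f(1) by (rule monic_factor_of_monic_int_poly_integral)
qed

lemma irreducible_deg2_no_roots:
  fixes f :: "'a::field poly"
  assumes deg: "degree f = 2" and no_root: "\<And>x. poly f x \<noteq> 0"
  shows "irreducible f"
proof (rule irreducibleI)
  show "f \<noteq> 0"
    using deg by auto
  then show "\<not> is_unit f"
    using deg by (simp add: is_unit_iff_degree)
  fix a b assume ab: "f = a * b"
  show "is_unit a \<or> is_unit b"
  proof (rule ccontr)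
    assume "\<not> (is_unit a \<or> is_unit b)"
    moreover have "a \<noteq> 0" "b \<noteq> 0"
      using ab deg by auto
    moreover have "degree a + degree b = 2"
      using ab deg \<open>a \<noteq> 0\<close> \<open>b \<noteq> 0\<close> by (simp add: degree_mult_eq)
    ultimately have "degree a = 1"
      by (auto simp: is_unit_iff_degree)
    then have a: "a = [:coeff a 0, coeff a 1:]"
      by (intro poly_eqI) (auto simp: coeff_pCons coeff_eq_0 split: nat.split)
    have "coeff a 1 \<noteq> 0"
      using \<open>a \<noteq> 0\<close> \<open>degree a = 1\<close> by (metis leading_coeff_0_iff)
    then have "poly a (- coeff a 0 / coeff a 1) = 0"
      by (subst a) simp
    then have "poly f (- coeff a 0 / coeff a 1) = 0"
      using ab by simp
    then show False
      using no_root by blast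
  qed
qed

lemma gen_field_subset_Rats: "z \<in> \<rat> \<Longrightarrow> gen_field z \<subseteq> \<rat>"
  unfolding gen_field_def by (auto elim!: Rats_cases simp: poly_map_poly_of_rat_of_rat)

lemma squarefree_mult_square_Int:
  fixes q :: rat and m :: int
  assumes "squarefree m" and "of_int m * q\<^sup>2 \<in> \<int>"
  shows "q \<in> \<int>"
proof -
  obtain n d where "quotient_of q = (n, d)"
    by (cases "quotient_of q")
  then have q: "q = of_int n / of_int d" and "d > 0" "coprime n d"
    by (auto intro: quotient_of_div quotient_of_denom_pos quotient_of_coprime)
  obtain k where "of_int m * q\<^sup>2 = of_int k"
    using assms(2) by (auto elim: Ints_cases)
  then have "m * n\<^sup>2 = k * d\<^sup>2"
    using \<open>d > 0\<close> by (simp add: q field_simps flip: of_int_mult of_int_power of_int_eq_iff)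
  then have "d\<^sup>2 dvd m * n\<^sup>2"
    by simp
  moreover have "coprime (d\<^sup>2) (n\<^sup>2)"
    using \<open>coprime n d\<close> by (simp add: coprime_commute)
  ultimately have "d\<^sup>2 dvd m"
    by (simp add: coprime_dvd_mult_left_iff)
  then have "d = 1"
    using assms(1) \<open>d > 0\<close> by (auto dest: squarefreeD)
  then show ?thesis
    by (simp add: q)
qed

lemma squarefree_5: "squarefree (5 :: int)"
  by (rule squarefree_prime) simp

section \<open>Floors and enumerations\<close>

lemma strict_mono_range_unique:
  fixes f g :: "nat \<Rightarrow> 'a::linorder"
  assumes "strict_mono f" "strict_mono g" "range f = range g"
  shows "f = g"
proof
  have le: "f n \<le> g n"
    if f: "strict_mono f" and g: "strict_mono g" and fg: "range f = range g"
      and IH: "\<And>k. k < n \<Longrightarrow> f k = g k" for f g :: "nat \<Rightarrow> 'a" and n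
  proof -
    obtain k where k: "g n = f k"
      using fg by (metis rangeI image_iff)
    have "\<not> k < n"
    proof
      assume "k < n"
      then have "g k = g n"
        using IH k by simp
      then show False
        using \<open>k < n\<close> strict_mono_eq[OF g] by simp
    qed
    then show ?thesis
      using k f by (simp add: strict_mono_less_eq)
  qed
  fix n show "f n = g n"
  proof (induction n rule: less_induct)
    case (less n)
    have "f n \<le> g n"
      using le[OF assms] less.IH by blast
    moreover have "g n \<le> f n"
      using le[OF assms(2,1) assms(3)[symmetric]] less.IH by fastforce
    ultimately show ?case
      by simp
  qed
qed

lemma range_even_odd: "range f = range (\<lambda>j. f (2 * j)) \<union> range (\<lambda>j. f (Suc (2 * j)))"
proof (intro equalityI subsetI)
  fix v assume "v \<in> range f"
  then obtain n where "v = f n"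
    by blast
  then show "v \<in> range (\<lambda>j. f (2 * j)) \<union> range (\<lambda>j. f (Suc (2 * j)))"
    by (cases "even n") (auto elim!: evenE oddE)
qed auto

lemma of_int_floor_less_if_not_Int: "c \<notin> \<int> \<Longrightarrow> of_int \<lfloor>c\<rfloor> < (c :: real)"
  by (metis Ints_of_int of_int_floor_le order_less_le)

lemma abs_diff_lt_1_iff_floor:
  fixes c :: real and x :: int
  assumes "c \<notin> \<int>"
  shows "\<bar>of_int x - c\<bar> < 1 \<longleftrightarrow> x = \<lfloor>c\<rfloor> \<or> x = \<lfloor>c\<rfloor> + 1"
  using of_int_floor_less_if_not_Int[OF assms] by (auto simp: abs_less_iff) linarith+

lemma range_floor_mult_diff:
  fixes c :: real
  assumes "c \<notin> \<int>"
  shows "range (\<lambda>k. \<lfloor>real (Suc (Suc k)) * c\<rfloor> - \<lfloor>real (Suc k) * c\<rfloor>) = {\<lfloor>c\<rfloor>, \<lfloor>c\<rfloor> + 1}"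
    (is "range ?\<Delta> = _")
proof -
  define \<delta> where "\<delta> = c - of_int \<lfloor>c\<rfloor>"
  have \<delta>: "0 < \<delta>" "\<delta> < 1"
    using of_int_floor_less_if_not_Int[OF assms] unfolding \<delta>_def by linarith+
  have \<Delta>_cases: "?\<Delta> k = \<lfloor>c\<rfloor> \<or> ?\<Delta> k = \<lfloor>c\<rfloor> + 1" for k
  proof -
    have "real (Suc (Suc k)) * c = real (Suc k) * c + c"
      by (simp add: algebra_simps)
    then show ?thesis
      by (simp add: floor_add)
  qed
  have attained: "\<exists>k. ?\<Delta> k = v" if v: "v \<in> {\<lfloor>c\<rfloor>, \<lfloor>c\<rfloor> + 1}" for v
  proof (rule ccontr)
    assume missing: "\<nexists>k. ?\<Delta> k = v"
    define w where "w = 2 * \<lfloor>c\<rfloor> + 1 - v"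
    have w: "w \<in> {\<lfloor>c\<rfloor>, \<lfloor>c\<rfloor> + 1}" "?\<Delta> k = w" for k
      using v missing \<Delta>_cases[of k] unfolding w_def by fastforce+
    have floor_eq: "\<lfloor>real (Suc k) * c\<rfloor> = \<lfloor>c\<rfloor> + int k * w" for k
      by (induction k) (use w(2) in \<open>simp_all add: algebra_simps\<close>)
    have bounds: "of_int \<lfloor>c\<rfloor> + of_int (int k * w) \<le> real (Suc k) * c"
        "real (Suc k) * c < of_int \<lfloor>c\<rfloor> + of_int (int k * w) + 1" for k
      using floor_eq[of k] by linarith+
    show False
    proof (cases "w = \<lfloor>c\<rfloor>")
      case True
      obtain k where "1 < real k * \<delta>"
        using ex_less_of_nat_mult[OF \<delta>(1)] by blast
      moreover have "real (Suc k) * \<delta> < 1"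
        using bounds(2)[of k] True by (simp add: \<delta>_def algebra_simps)
      ultimately show False
        using \<delta> by (simp add: algebra_simps)
    next
      case False
      then have "w = \<lfloor>c\<rfloor> + 1"
        using w(1) by simp
      obtain k where "1 < real k * (1 - \<delta>)"
        using ex_less_of_nat_mult[of "1 - \<delta>"] \<delta> by auto
      moreover have "real k \<le> real (Suc k) * \<delta>"
        using bounds(1)[of k] \<open>w = \<lfloor>c\<rfloor> + 1\<close> by (simp add: \<delta>_def algebra_simps)
      ultimately show False
        using \<delta> by (simp add: algebra_simps)
    qed
  qed
  show ?thesis
  proof (intro set_eqI iffI)
    show "v \<in> {\<lfloor>c\<rfloor>, \<lfloor>c\<rfloor> + 1}" if v: "v \<in> range ?\<Delta>" for v
    proof -
      obtain k where "v = ?\<Delta> k"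
        using v by blast
      then show ?thesis
        using \<Delta>_cases[of k] by simp
    qed
    show "v \<in> range ?\<Delta>" if "v \<in> {\<lfloor>c\<rfloor>, \<lfloor>c\<rfloor> + 1}" for v
      using attained[OF that] by (auto intro: range_eqI)
  qed
qed

section \<open>Dickson polynomials\<close>

fun dickson :: "nat \<Rightarrow> 'a::comm_ring_1 \<Rightarrow> 'a" where
  "dickson 0 x = 2"
| "dickson (Suc 0) x = x"
| "dickson (Suc (Suc n)) x = x * dickson (Suc n) x - dickson n x"

lemma dickson_2cos: "dickson n (2 * cos t) = 2 * cos (real n * t)"
proof (induction n rule: induct_nat_012)
  case (ge2 n)
  have "2 * cos t * (2 * cos (real (Suc n) * t)) - 2 * cos (real n * t) = 2 * cos (real (Suc (Suc n)) * t)"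
    using cos_add[of "real (Suc n) * t" t] cos_diff[of "real (Suc n) * t" t]
    by (simp add: algebra_simps)
  then show ?case
    using ge2 by simp
qed simp_all

lemma dickson_add_inverse:
  assumes "z * w = 1"
  shows "dickson n (z + w) = z ^ n + w ^ n"
proof (induction n rule: induct_nat_012)
  case (ge2 n)
  have "(z + w) * (z ^ Suc n + w ^ Suc n) = z ^ Suc (Suc n) + w ^ Suc (Suc n) + (z * w) * (z ^ n + w ^ n)"
    by (simp add: algebra_simps)
  then show ?case
    using ge2 assms by simp
qed simp_all

lemma abs_le_2_if_dickson_eq_2:
  fixes x :: real
  assumes "n \<ge> 1" and "dickson n x = 2"
  shows "\<bar>x\<bar> \<le> 2"
proof (rule ccontr)
  assume "\<not> \<bar>x\<bar> \<le> 2"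
  then have "2\<^sup>2 < \<bar>x\<bar>\<^sup>2"
    by (intro power_strict_mono) auto
  then have "x\<^sup>2 > 4"
    by simp
  define z where "z = (x + sqrt (x\<^sup>2 - 4)) / 2"
  define w where "w = (x - sqrt (x\<^sup>2 - 4)) / 2"
  have "z * w = 1" and "z + w = x" and "z \<noteq> w"
    using \<open>x\<^sup>2 > 4\<close> by (simp_all add: z_def w_def field_simps power2_eq_square)
  have "z ^ n * w ^ n = 1"
    using \<open>z * w = 1\<close> by (metis power_mult_distrib power_one)
  moreover have "z ^ n + w ^ n = 2"
    using assms(2) dickson_add_inverse[OF \<open>z * w = 1\<close>] \<open>z + w = x\<close> by simp
  moreover have "(z ^ n - 1)\<^sup>2 = z ^ n * (z ^ n + w ^ n - 2) + (1 - z ^ n * w ^ n)"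
    by (simp add: power2_eq_square algebra_simps)
  ultimately have "(z ^ n - 1)\<^sup>2 = 0"
    by simp
  then have "z ^ n = 1"
    by simp
  then have "z = 1 \<or> z = -1"
    using assms(1) power_eq_1_iff[of z n] by auto
  then show False
    using \<open>z * w = 1\<close> \<open>z \<noteq> w\<close> by auto
qed

lemma cos_pi_div_5: "cos (pi / 5) = (1 + sqrt 5) / 4"
proof -
  define c where "c = cos (pi / 5)"
  have "cos (3 * (pi / 5)) = - cos (2 * (pi / 5))"
    using cos_pi_minus[of "2 * (pi / 5)"] by simp
  then have "(c + 1) * (4 * c\<^sup>2 - 2 * c - 1) = 0"
    unfolding c_def cos_treble_cos cos_double_cos by (simp add: algebra_simps power2_eq_square power3_eq_cube)
  moreover have "c > 1 / 2"
    using cos_monotone_0_pi[of "pi / 5" "pi / 3"] cos_60 unfolding c_def by simp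
  ultimately have "4 * c\<^sup>2 - 2 * c - 1 = 0"
    by simp
  then have "(4 * c - 1)\<^sup>2 = 5"
    by (simp add: algebra_simps power2_eq_square)
  moreover have "4 * c - 1 \<ge> 0"
    using \<open>c > 1 / 2\<close> by simp
  ultimately have "4 * c - 1 = sqrt 5"
    by (metis real_sqrt_unique)
  then show ?thesis
    by (simp add: c_def)
qed

lemma cos_2pi_div_5: "cos (2 * pi / 5) = (sqrt 5 - 1) / 4"
  using cos_double_cos[of "pi / 5"] by (simp add: cos_pi_div_5 power2_eq_square algebra_simps)

lemma sqrt_5_lt_3: "sqrt 5 < (3 :: real)"
  using real_sqrt_less_mono[of 5 9] by simp

section \<open>The quadratic field\<close>

locale quadratic_field =
  fixes m :: int
  assumes m_gt_1: "m > 1" and squarefree_m: "squarefree m"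

begin

abbreviation sqrt_m :: real where "sqrt_m \<equiv> sqrt (real_of_int m)"

lemma abs_of_int_m [simp]: "\<bar>real_of_int m\<bar> = of_int m"
  using m_gt_1 by simp

lemma sqrt_m_mult_self [simp]: "sqrt_m * sqrt_m = of_int m"
  by simp

lemma sqrt_m_irrational: "sqrt_m \<notin> \<rat>"
proof
  assume "sqrt_m \<in> \<rat>"
  have "algebraic_int sqrt_m"
    by (intro algebraic_int_sqrt) simp
  then have "sqrt_m \<in> \<int>"
    using \<open>sqrt_m \<in> \<rat>\<close> by (rule rational_algebraic_int_is_int)
  then obtain k where "sqrt_m = of_int k"
    by (auto elim: Ints_cases)
  then have "real_of_int m = of_int (k\<^sup>2)"
    using sqrt_m_mult_self by (metis of_int_power power2_eq_square)
  then have "k\<^sup>2 = m"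
    by (simp only: of_int_eq_iff)
  then have "is_unit k"
    using squarefreeD[OF squarefree_m, of k] by simp
  then have "\<bar>k\<bar> = 1"
    by (simp add: zdvd1_eq)
  then have "m = 1"
    using \<open>k\<^sup>2 = m\<close> by (metis power2_abs power_one)
  then show False
    using m_gt_1 by simp
qed

lemma QK_eq_iff:
  "of_rat a + of_rat b * sqrt_m = of_rat c + of_rat d * sqrt_m \<longleftrightarrow> a = c \<and> b = d"
proof
  assume eq: "of_rat a + of_rat b * sqrt_m = of_rat c + of_rat d * sqrt_m"
  show "a = c \<and> b = d"
  proof (cases "b = d")
    case False
    then have "sqrt_m = of_rat ((a - c) / (d - b))"
      using eq by (simp add: of_rat_divide of_rat_diff field_simps)
    then show ?thesis
      using sqrt_m_irrational by (metis Rats_of_rat)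
  qed (use eq in simp)
qed simp

lemma QK_in_Rats_iff: "of_rat a + of_rat b * sqrt_m \<in> \<rat> \<longleftrightarrow> b = 0"
proof
  assume "of_rat a + of_rat b * sqrt_m \<in> \<rat>"
  then obtain q where "of_rat a + of_rat b * sqrt_m = of_rat q + of_rat 0 * sqrt_m"
    by (auto elim: Rats_cases)
  then show "b = 0"
    by (simp only: QK_eq_iff)
qed simp

lemma QK_memI [intro]: "of_rat a + of_rat b * sqrt_m \<in> QK m"
  unfolding QK_def by blast

lemma QK_memE:
  assumes "z \<in> QK m"
  obtains a b where "z = of_rat a + of_rat b * sqrt_m"
  using assms unfolding QK_def by blast

lemma qconj_eq: "qconj m (of_rat a + of_rat b * sqrt_m) = of_rat a - of_rat b * sqrt_m"
  unfolding qconj_def by (rule the_equality) (auto simp: QK_eq_iff)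

lemma QK_of_rat [intro]: "of_rat a \<in> QK m"
  using QK_memI[of a 0] by simp

lemma qconj_of_rat [simp]: "qconj m (of_rat a) = of_rat a"
  using qconj_eq[of a 0] by simp

lemma QK_add [intro]: "u \<in> QK m \<Longrightarrow> v \<in> QK m \<Longrightarrow> u + v \<in> QK m"
  and qconj_add: "u \<in> QK m \<Longrightarrow> v \<in> QK m \<Longrightarrow> qconj m (u + v) = qconj m u + qconj m v"
proof -
  assume "u \<in> QK m" "v \<in> QK m"
  then obtain a b c d where uv: "u = of_rat a + of_rat b * sqrt_m" "v = of_rat c + of_rat d * sqrt_m"
    by (metis QK_memE)
  then have sum: "u + v = of_rat (a + c) + of_rat (b + d) * sqrt_m"
    by (simp add: of_rat_add algebra_simps)
  then show "u + v \<in> QK m"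
    by auto
  have "qconj m (u + v) = of_rat (a + c) - of_rat (b + d) * sqrt_m"
    unfolding sum by (rule qconj_eq)
  then show "qconj m (u + v) = qconj m u + qconj m v"
    by (simp add: uv qconj_eq of_rat_add algebra_simps)
qed

lemma QK_diff [intro]: "u \<in> QK m \<Longrightarrow> v \<in> QK m \<Longrightarrow> u - v \<in> QK m"
  and qconj_diff: "u \<in> QK m \<Longrightarrow> v \<in> QK m \<Longrightarrow> qconj m (u - v) = qconj m u - qconj m v"
proof -
  assume "u \<in> QK m" "v \<in> QK m"
  then obtain a b c d where uv: "u = of_rat a + of_rat b * sqrt_m" "v = of_rat c + of_rat d * sqrt_m"
    by (metis QK_memE)
  then have diff: "u - v = of_rat (a - c) + of_rat (b - d) * sqrt_m"
    by (simp add: of_rat_diff algebra_simps)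
  then show "u - v \<in> QK m"
    by auto
  have "qconj m (u - v) = of_rat (a - c) - of_rat (b - d) * sqrt_m"
    unfolding diff by (rule qconj_eq)
  then show "qconj m (u - v) = qconj m u - qconj m v"
    by (simp add: uv qconj_eq of_rat_diff algebra_simps)
qed

lemma QK_mult [intro]: "u \<in> QK m \<Longrightarrow> v \<in> QK m \<Longrightarrow> u * v \<in> QK m"
  and qconj_mult: "u \<in> QK m \<Longrightarrow> v \<in> QK m \<Longrightarrow> qconj m (u * v) = qconj m u * qconj m v"
proof -
  assume "u \<in> QK m" "v \<in> QK m"
  then obtain a b c d where uv: "u = of_rat a + of_rat b * sqrt_m" "v = of_rat c + of_rat d * sqrt_m"
    by (metis QK_memE)
  have "u * v = of_rat (a * c + of_int m * b * d) + of_rat (a * d + b * c) * sqrt_m"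
    by (simp add: uv of_rat_add of_rat_mult algebra_simps)
  moreover have "qconj m u * qconj m v = of_rat (a * c + of_int m * b * d) - of_rat (a * d + b * c) * sqrt_m"
    by (simp add: uv qconj_eq of_rat_add of_rat_mult algebra_simps)
  ultimately show "u * v \<in> QK m" and "qconj m (u * v) = qconj m u * qconj m v"
    by (simp_all only: qconj_eq QK_memI)
qed

lemma QK_inverse [intro]:
  assumes "v \<in> QK m"
  shows "inverse v \<in> QK m"
proof -
  obtain a b where v: "v = of_rat a + of_rat b * sqrt_m"
    using assms by (rule QK_memE)
  define N where "N = a * a - of_int m * b * b"
  have N: "v * (of_rat a - of_rat b * sqrt_m) = of_rat N"
    by (simp add: v N_def of_rat_diff of_rat_mult algebra_simps)
  show ?thesis
  proof (cases "N = 0")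
    case True
    then have "v = 0 \<or> of_rat a - of_rat b * sqrt_m = of_rat 0 + of_rat 0 * sqrt_m"
      using N by simp
    then have "v = 0"
      using QK_eq_iff[of a "-b" 0 0] v by (auto simp: of_rat_minus)
    then show ?thesis
      using QK_of_rat[of 0] by simp
  next
    case False
    then have "v \<noteq> 0"
      using N by auto
    then have "inverse v = (of_rat a - of_rat b * sqrt_m) / of_rat N"
      using N False by (simp add: field_simps)
    also have "\<dots> = of_rat (a / N) + of_rat (- b / N) * sqrt_m"
      by (simp add: of_rat_divide of_rat_minus diff_divide_distrib)
    finally show ?thesis
      by auto
  qed
qed

lemma poly_in_QK: "z \<in> QK m \<Longrightarrow> poly (map_poly of_rat p) z \<in> QK m"
  by (induction p) (use QK_of_rat[of 0] in \<open>simp_all add: map_poly_pCons QK_add QK_mult QK_of_rat\<close>)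

lemma qconj_poly:
  assumes "z \<in> QK m"
  shows "qconj m (poly (map_poly of_rat p) z) = poly (map_poly of_rat p) (qconj m z)"
proof (induction p)
  case 0
  show ?case
    using qconj_of_rat[of 0] by simp
next
  case (pCons a p)
  have "z * poly (map_poly of_rat p) z \<in> QK m"
    using assms poly_in_QK by blast
  then show ?case
    using assms poly_in_QK pCons.IH by (simp add: map_poly_pCons qconj_add qconj_mult QK_of_rat)
qed

lemma poly_qconj_eq_0:
  "z \<in> QK m \<Longrightarrow> poly (map_poly of_rat p) z = 0 \<Longrightarrow> poly (map_poly of_rat p) (qconj m z) = 0"
  using qconj_poly[of z p] qconj_of_rat[of 0] by simp

lemma gen_field_eq_QK_iff:
  assumes "z \<in> QK m"
  shows "gen_field z = QK m \<longleftrightarrow> z \<notin> \<rat>"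
proof
  assume "gen_field z = QK m"
  moreover have "sqrt_m \<in> QK m - \<rat>"
    using QK_memI[of 0 1] sqrt_m_irrational by simp
  ultimately show "z \<notin> \<rat>"
    using gen_field_subset_Rats by blast
next
  assume "z \<notin> \<rat>"
  obtain a b where z: "z = of_rat a + of_rat b * sqrt_m"
    using assms by (rule QK_memE)
  with \<open>z \<notin> \<rat>\<close> have "b \<noteq> 0"
    by auto
  show "gen_field z = QK m"
  proof
    show "gen_field z \<subseteq> QK m"
    proof
      fix w assume "w \<in> gen_field z"
      then obtain p q where "w = poly (map_poly of_rat p) z * inverse (poly (map_poly of_rat q) z)"
        unfolding gen_field_def divide_inverse by blast
      then show "w \<in> QK m"
        using poly_in_QK[OF assms] by (simp add: QK_mult QK_inverse)
    qed
    show "QK m \<subseteq> gen_field z"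
    proof
      fix w assume "w \<in> QK m"
      then obtain c d where w: "w = of_rat c + of_rat d * sqrt_m"
        by (rule QK_memE)
      have "w = poly (map_poly of_rat [:c - d * a / b, d / b:]) z / poly (map_poly of_rat 1) z"
        using \<open>b \<noteq> 0\<close> by (simp add: w z map_poly_pCons of_rat_diff of_rat_mult of_rat_divide field_simps)
      then show "w \<in> gen_field z"
        unfolding gen_field_def by fastforce
    qed
  qed
qed

lemma dickson_QK:
  assumes "x \<in> QK m"
  shows "dickson n x \<in> QK m \<and> qconj m (dickson n x) = dickson n (qconj m x)"
proof (induction n rule: induct_nat_012)
  case 0
  show ?case
    using QK_of_rat[of 2] qconj_of_rat[of 2] by simp
next
  case (ge2 n)
  then show ?case
    using assms by (simp add: QK_diff QK_mult qconj_diff qconj_mult)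
qed (use assms in simp)

end

section \<open>The ring of integers\<close>

locale quadratic_field_1_mod_4 = quadratic_field +
  assumes m_mod_4: "m mod 4 = 1"

begin

abbreviation \<omega> :: real where "\<omega> \<equiv> (1 + sqrt_m) / 2"

abbreviation \<gamma> :: real where "\<gamma> \<equiv> (sqrt_m - 1) / 2"

lemma m_ge_5: "m \<ge> 5"
  using m_gt_1 m_mod_4 by presburger

lemma m_div_4: "m = 4 * (m div 4) + 1"
  using m_mod_4 by (metis mod_div_mult_eq add.commute mult.commute)

lemma sqrt_m_gt_2: "sqrt_m > 2"
proof -
  have "sqrt 4 < sqrt_m"
    using m_ge_5 by (subst real_sqrt_less_iff) simp
  then show ?thesis
    by simp
qed

lemma int_omega_eq:
  "of_int x + of_int y * \<omega> = of_rat (of_int x + of_int y / 2) + of_rat (of_int y / 2) * sqrt_m"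
  by (simp add: of_rat_add of_rat_mult of_rat_divide field_simps)

lemma int_omega_in_QK: "of_int x + of_int y * \<omega> \<in> QK m"
  unfolding int_omega_eq by (rule QK_memI)

lemma qconj_int_omega: "qconj m (of_int x + of_int y * \<omega>) = of_int x - of_int y * \<gamma>"
  unfolding int_omega_eq qconj_eq by (simp add: of_rat_add of_rat_mult of_rat_divide field_simps)

lemma int_omega_in_Rats_iff: "of_int x + of_int y * \<omega> \<in> \<rat> \<longleftrightarrow> y = 0"
proof
  assume rat: "of_int x + of_int y * \<omega> \<in> \<rat>"
  show "y = 0"
  proof (rule ccontr)
    assume "y \<noteq> 0"
    then have "sqrt_m = 2 * (of_int x + of_int y * \<omega> - of_int x) / of_int y - 1"
      by (simp add: field_simps)
    also have "\<dots> \<in> \<rat>"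
      using rat by (intro Rats_diff Rats_divide Rats_mult) auto
    finally show False
      using sqrt_m_irrational by simp
  qed
qed simp

lemma gamma_mult_not_Int: "y \<noteq> 0 \<Longrightarrow> of_int y * \<gamma> \<notin> \<int>"
proof
  assume "y \<noteq> 0" and "of_int y * \<gamma> \<in> \<int>"
  then have y\<gamma>: "of_int y * \<gamma> \<in> \<rat>"
    using Ints_subset_Rats by blast
  have "2 * (of_int y * \<gamma>) + of_int y \<in> \<rat>"
    by (rule Rats_add[OF Rats_mult[OF _ y\<gamma>]]) simp_all
  also have "2 * (of_int y * \<gamma>) + of_int y = of_int (-y) + of_int (2 * y) * \<omega>"
    by (simp add: field_simps)
  finally have "of_int (-y) + of_int (2 * y) * \<omega> \<in> \<rat>" .
  then show False
    using \<open>y \<noteq> 0\<close> int_omega_in_Rats_iff[of "-y" "2 * y"] by simp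
qed

lemma gamma_not_Int: "\<gamma> \<notin> \<int>"
  using gamma_mult_not_Int[of 1] by simp

definition omega_min_poly :: "int \<Rightarrow> int \<Rightarrow> int poly" where
  "omega_min_poly x y = [:x\<^sup>2 + x * y - (m div 4) * y\<^sup>2, - (2 * x + y), 1:]"

lemma poly_omega_min_poly:
  "poly (map_poly of_int (omega_min_poly x y)) (w :: 'a::real_field) =
     (w - of_real (of_int x + of_int y * \<omega>)) * (w - of_real (of_int x - of_int y * \<gamma>))"
proof -
  have gen: "(x + y * ((1 + \<rho>) / 2)) * (x - y * ((\<rho> - 1) / 2)) = x\<^sup>2 + x * y - ((\<rho> * \<rho> - 1) / 4) * y\<^sup>2"
    for x y \<rho> :: real
    by (simp add: field_simps power2_eq_square)
  have k: "(sqrt_m * sqrt_m - 1) / 4 = of_int (m div 4)"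
    unfolding sqrt_m_mult_self using arg_cong[OF m_div_4, of real_of_int] by simp
  have prod: "(of_int x + of_int y * \<omega>) * (of_int x - of_int y * \<gamma>) =
      real_of_int (x\<^sup>2 + x * y - (m div 4) * y\<^sup>2)"
    unfolding gen k by (simp only: of_int_add of_int_diff of_int_mult of_int_power)
  have sum: "(of_int x + of_int y * \<omega>) + (of_int x - of_int y * \<gamma>) = real_of_int (2 * x + y)"
    by (simp add: field_simps)
  have vieta: "(w - of_real a) * (w - of_real b) = w * w - of_real (a + b) * w + of_real (a * b)" for a b
    by (simp add: algebra_simps)
  show ?thesis
    unfolding vieta sum prod by (simp add: omega_min_poly_def map_poly_pCons algebra_simps)
qed

lemma alg_int_int_omega: "alg_int (of_int x + of_int y * \<omega>)"
  unfolding alg_int_def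
proof (intro exI conjI)
  show "lead_coeff (omega_min_poly x y) = 1"
    by (simp add: omega_min_poly_def)
  show "poly (map_poly of_int (omega_min_poly x y)) (of_int x + of_int y * \<omega>) = 0"
    using poly_omega_min_poly[where 'a = real] by simp
qed

lemma int_omega_of_integral_trace_norm:
  fixes a b :: rat
  assumes "2 * a \<in> \<int>" and "a\<^sup>2 - of_int m * b\<^sup>2 \<in> \<int>"
  obtains x y where "of_rat a + of_rat b * sqrt_m = of_int x + of_int y * \<omega>"
proof -
  obtain t where t: "2 * a = of_int t"
    using assms(1) by (auto elim: Ints_cases)
  obtain n where n: "a\<^sup>2 - of_int m * b\<^sup>2 = of_int n"
    using assms(2) by (auto elim: Ints_cases)
  have "of_int m * (2 * b)\<^sup>2 = (2 * a)\<^sup>2 - 4 * (a\<^sup>2 - of_int m * b\<^sup>2)"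
    by (simp add: power2_eq_square algebra_simps)
  also have "\<dots> = of_int (t\<^sup>2 - 4 * n)"
    by (simp add: t n)
  finally have "2 * b \<in> \<int>"
    using squarefree_mult_square_Int[OF squarefree_m] by (metis Ints_of_int)
  then obtain y where y: "2 * b = of_int y"
    by (auto elim: Ints_cases)
  define k where "k = m div 4"
  note k = m_div_4[folded k_def]
  have "of_int (t\<^sup>2 - m * y\<^sup>2) = (of_int (4 * n) :: rat)"
    by (simp add: t [symmetric] y [symmetric] n [symmetric] power2_eq_square algebra_simps)
  then have "(t - y) * (t + y) = 2 * (2 * (n + k * y\<^sup>2))"
    unfolding of_int_eq_iff k by (simp add: power2_eq_square algebra_simps)
  then have "even ((t - y) * (t + y))"
    by simp
  then have "even (t - y)"
    by (simp add: even_mult_iff)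
  then obtain x where x: "t - y = 2 * x"
    by (rule evenE)
  have "real_of_rat a = of_int t / 2" and "real_of_rat b = of_int y / 2"
    using t y by (metis of_rat_of_int_eq of_rat_divide nonzero_mult_div_cancel_left of_rat_numeral_eq
        zero_neq_numeral)+
  then have "of_rat a + of_rat b * sqrt_m = of_int x + of_int y * \<omega>"
    using x by (simp add: field_simps)
  then show ?thesis
    by (rule that)
qed

lemma alg_int_QK_imp_int_omega:
  assumes "z \<in> QK m" and "alg_int z"
  obtains x y where "z = of_int x + of_int y * \<omega>"
proof -
  obtain a b where z: "z = of_rat a + of_rat b * sqrt_m"
    using assms(1) by (rule QK_memE)
  have "algebraic_int z"
    using assms(2) by (simp add: alg_int_iff_algebraic_int)
  show ?thesis
  proof (cases "b = 0")
    case True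
    then have "z \<in> \<rat>"
      by (simp add: z)
    with \<open>algebraic_int z\<close> have "z \<in> \<int>"
      by (rule rational_algebraic_int_is_int)
    then obtain x where "z = of_int x"
      by (auto elim: Ints_cases)
    then show ?thesis
      using that[of x 0] by simp
  next
    case False
    define f :: "rat poly" where "f = [:a\<^sup>2 - of_int m * b\<^sup>2, - (2 * a), 1:]"
    have root: "poly (map_poly of_rat f) z = 0"
      by (simp add: f_def z map_poly_pCons of_rat_add of_rat_diff of_rat_mult of_rat_minus
          of_rat_power power2_eq_square algebra_simps)
    have minimal: "g = 0" if "degree g < degree f" and g: "poly (map_poly of_rat g) z = 0" for g
    proof -
      have "degree g \<le> 1"
        using that(1) by (simp add: f_def)
      then have g_eq: "g = [:coeff g 0, coeff g 1:]"
        by (intro poly_eqI) (auto simp: coeff_pCons coeff_eq_0 split: nat.split)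
      have "coeff g 1 = 0"
      proof (rule ccontr)
        assume "coeff g 1 \<noteq> 0"
        then have "z = of_rat (- coeff g 0 / coeff g 1)"
          using g by (subst (asm) g_eq) (simp add: map_poly_pCons of_rat_divide of_rat_minus field_simps)
        then show False
          using \<open>b \<noteq> 0\<close> QK_in_Rats_iff z by (metis Rats_of_rat)
      qed
      then show "g = 0"
        using g by (subst g_eq) (subst (asm) g_eq, simp add: map_poly_pCons)
    qed
    have "coeff f i \<in> \<int>" for i
      by (rule algebraic_int_min_poly_integral[OF \<open>algebraic_int z\<close> _ root minimal])
        (simp add: f_def)
    from this[of 0] this[of 1] have "2 * a \<in> \<int>" and "a\<^sup>2 - of_int m * b\<^sup>2 \<in> \<int>"
      by (simp_all add: f_def)
    then show ?thesis
      using that z by (metis int_omega_of_integral_trace_norm)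
  qed
qed

section \<open>Pisot numbers\<close>

lemma int_omega_in_pisotK:
  assumes y: "y \<ge> 1" and conj: "\<bar>of_int x - of_int y * \<gamma>\<bar> < 1"
  shows "of_int x + of_int y * \<omega> \<in> pisotK m"
proof -
  define t where "t = of_int x + of_int y * \<omega>"
  define t' where "t' = of_int x - of_int y * \<gamma>"
  define f :: "rat poly" where "f = map_poly of_int (omega_min_poly x y)"
  have f_eval: "poly (map_poly of_rat f) w = (w - of_real t) * (w - of_real t')" for w :: "'a::real_field"
    unfolding f_def t_def t'_def by (simp add: map_poly_map_poly o_def poly_omega_min_poly)
  have "t \<notin> \<rat>" and "t' \<notin> \<rat>"
    using y int_omega_in_Rats_iff[of x y] int_omega_in_Rats_iff[of "x + y" "- y"]
    by (simp_all add: t_def t'_def field_simps)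
  have "irreducible f"
  proof (rule irreducible_deg2_no_roots)
    show "degree f = 2"
      by (simp add: f_def omega_min_poly_def degree_map_poly)
    show "poly f q \<noteq> 0" for q
      using f_eval[of "of_rat q :: real"] \<open>t \<notin> \<rat>\<close> \<open>t' \<notin> \<rat>\<close> Rats_of_rat[of q]
      by (auto simp: poly_map_poly_of_rat_of_rat)
  qed
  have "t - t' = of_int y * sqrt_m"
    by (simp add: t_def t'_def field_simps)
  moreover have "of_int y * sqrt_m \<ge> sqrt_m"
    using y m_gt_1 mult_right_mono[of 1 "of_int y" sqrt_m] by simp
  ultimately have "t > 1"
    using conj sqrt_m_gt_2 unfolding t'_def by linarith
  have "pisot t"
    unfolding pisot_def
  proof (intro conjI exI[of _ f] allI impI)
    show "alg_int t"
      unfolding t_def by (rule alg_int_int_omega)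
    show "poly (map_poly of_rat f) (complex_of_real t) = 0"
      by (simp add: f_eval)
    show "cmod z < 1" if "poly (map_poly of_rat f) z = 0 \<and> z \<noteq> complex_of_real t" for z
    proof -
      have "z = complex_of_real t'"
        using that by (auto simp: f_eval)
      then show ?thesis
        using conj by (simp only: norm_of_real t'_def)
    qed
  qed fact+
  moreover have "t \<in> QK m"
    unfolding t_def by (rule int_omega_in_QK)
  ultimately show ?thesis
    using gen_field_eq_QK_iff \<open>t \<notin> \<rat>\<close> unfolding pisotK_def t_def by blast
qed

lemma pisotK_imp_int_omega:
  assumes "t \<in> pisotK m"
  obtains x y where "t = of_int x + of_int y * \<omega>" "y \<ge> 1" "\<bar>of_int x - of_int y * \<gamma>\<bar> < 1"
proof -
  have "t \<in> QK m" and "pisot t" and "gen_field t = QK m"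
    using assms by (auto simp: pisotK_def)
  obtain x y where t: "t = of_int x + of_int y * \<omega>"
    using alg_int_QK_imp_int_omega \<open>t \<in> QK m\<close> \<open>pisot t\<close> by (metis pisot_def)
  have "y \<noteq> 0"
    using gen_field_eq_QK_iff[OF \<open>t \<in> QK m\<close>] \<open>gen_field t = QK m\<close> int_omega_in_Rats_iff t by simp
  obtain p where "t > 1" and p_root: "poly (map_poly of_rat p) (complex_of_real t) = 0"
    and p_others: "\<And>z. poly (map_poly of_rat p) z = 0 \<and> z \<noteq> complex_of_real t \<Longrightarrow> cmod z < 1"
    using \<open>pisot t\<close> unfolding pisot_def by blast
  define t' where "t' = of_int x - of_int y * \<gamma>"
  have "poly (map_poly of_rat p) t = 0"
    using p_root by (simp add: poly_map_poly_of_rat_of_real)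
  moreover have "qconj m t = t'"
    unfolding t t'_def by (rule qconj_int_omega)
  ultimately have "poly (map_poly of_rat p) t' = 0"
    using poly_qconj_eq_0[OF \<open>t \<in> QK m\<close>] by metis
  then have "poly (map_poly of_rat p) (complex_of_real t') = 0"
    by (simp add: poly_map_poly_of_rat_of_real)
  moreover have t_minus_t': "t - t' = of_int y * sqrt_m"
    by (simp add: t t'_def field_simps)
  then have "complex_of_real t' \<noteq> complex_of_real t"
    using \<open>y \<noteq> 0\<close> sqrt_m_gt_2 by auto
  ultimately have "\<bar>t'\<bar> < 1"
    using p_others by fastforce
  then have "of_int y * sqrt_m > 0"
    using t_minus_t' \<open>t > 1\<close> by linarith
  then have "y \<ge> 1"
    using m_gt_1 by (simp add: zero_less_mult_iff)
  then show ?thesis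
    using that t \<open>\<bar>t'\<bar> < 1\<close> unfolding t'_def by blast
qed

lemma pisotK_eq:
  "pisotK m = {of_int x + of_int y * \<omega> | x y. y \<ge> 1 \<and> \<bar>of_int x - of_int y * \<gamma>\<bar> < 1}"
  using int_omega_in_pisotK pisotK_imp_int_omega by blast

text \<open>The Pisot numbers with \<open>\<omega>\<close>-coordinate \<open>y\<close> are \<open>\<lfloor>y\<gamma>\<rfloor> + y\<omega>\<close> and \<open>\<lfloor>y\<gamma>\<rfloor> + 1 + y\<omega>\<close>;
  they are listed by increasing \<open>y\<close>.\<close>

definition pisot_seq :: "nat \<Rightarrow> real" where
  "pisot_seq n = of_int (\<lfloor>real (Suc (n div 2)) * \<gamma>\<rfloor> + int (n mod 2)) + real (Suc (n div 2)) * \<omega>"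

lemma range_pisot_seq: "range pisot_seq = pisotK m"
proof (intro set_eqI iffI)
  fix t assume "t \<in> range pisot_seq"
  then obtain n where t: "t = pisot_seq n"
    by blast
  define y where "y = int (Suc (n div 2))"
  define x where "x = \<lfloor>of_int y * \<gamma>\<rfloor> + int (n mod 2)"
  have "of_int y * \<gamma> \<notin> \<int>"
    by (rule gamma_mult_not_Int) (simp add: y_def)
  moreover have "n mod 2 = 0 \<or> n mod 2 = 1"
    by auto
  then have "x = \<lfloor>of_int y * \<gamma>\<rfloor> \<or> x = \<lfloor>of_int y * \<gamma>\<rfloor> + 1"
    by (auto simp: x_def)
  ultimately have "\<bar>of_int x - of_int y * \<gamma>\<bar> < 1"
    using abs_diff_lt_1_iff_floor by blast
  moreover have "t = of_int x + of_int y * \<omega>"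
    by (simp add: t pisot_seq_def x_def y_def)
  moreover have "y \<ge> 1"
    by (simp add: y_def)
  ultimately show "t \<in> pisotK m"
    unfolding pisotK_eq by blast
next
  fix t assume "t \<in> pisotK m"
  then obtain x y where t: "t = of_int x + of_int y * \<omega>" and "y \<ge> 1"
    and "\<bar>of_int x - of_int y * \<gamma>\<bar> < 1"
    unfolding pisotK_eq by blast
  moreover have "of_int y * \<gamma> \<notin> \<int>"
    using \<open>y \<ge> 1\<close> by (intro gamma_mult_not_Int) simp
  ultimately obtain e where e: "e < 2" "x = \<lfloor>of_int y * \<gamma>\<rfloor> + int e"
    using abs_diff_lt_1_iff_floor by (metis add.right_neutral of_nat_0 of_nat_1 one_less_numeral_iff
        semiring_norm(76) zero_less_numeral)
  define n where "n = 2 * nat (y - 1) + e"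
  have "Suc (n div 2) = nat y" and "n mod 2 = e"
    using \<open>y \<ge> 1\<close> e(1) by (simp_all add: n_def)
  then have "t = pisot_seq n"
    using \<open>y \<ge> 1\<close> by (simp add: t e(2) pisot_seq_def)
  then show "t \<in> range pisot_seq"
    by blast
qed

lemma pisot_seq_Suc_even: "pisot_seq (Suc (2 * j)) = pisot_seq (2 * j) + 1"
  by (simp add: pisot_seq_def)

lemma pisot_seq_Suc_odd:
  "pisot_seq (Suc (Suc (2 * j))) - pisot_seq (Suc (2 * j)) =
     \<gamma> + of_int (\<lfloor>real (Suc (Suc j)) * \<gamma>\<rfloor> - \<lfloor>real (Suc j) * \<gamma>\<rfloor>)"
proof -
  have "Suc (2 * j) div 2 = j" "Suc (2 * j) mod 2 = 1" "Suc (Suc (2 * j)) div 2 = Suc j"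
    "Suc (Suc (2 * j)) mod 2 = 0"
    by presburger+
  then show ?thesis
    by (simp add: pisot_seq_def field_simps)
qed

lemma strict_mono_pisot_seq: "strict_mono pisot_seq"
proof (rule strict_monoI_Suc)
  fix n
  show "pisot_seq n < pisot_seq (Suc n)"
  proof (cases "even n")
    case True
    then obtain j where "n = 2 * j"
      by (rule evenE)
    then show ?thesis
      using pisot_seq_Suc_even[of j] by simp
  next
    case False
    then obtain j where n: "n = Suc (2 * j)"
      by (metis oddE Suc_eq_plus1)
    have "\<gamma> > 0"
      using m_gt_1 by simp
    then have "\<lfloor>real (Suc j) * \<gamma>\<rfloor> \<le> \<lfloor>real (Suc (Suc j)) * \<gamma>\<rfloor>"
      by (intro floor_mono mult_right_mono) simp_all
    then have "0 \<le> real_of_int (\<lfloor>real (Suc (Suc j)) * \<gamma>\<rfloor> - \<lfloor>real (Suc j) * \<gamma>\<rfloor>)"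
      by simp
    then show ?thesis
      unfolding n using pisot_seq_Suc_odd[of j] \<open>\<gamma> > 0\<close> by linarith
  qed
qed

lemma pisot_enum_eq: "pisot_enum m = pisot_seq"
  unfolding pisot_enum_def
proof (rule the_equality)
  show "strict_mono pisot_seq \<and> range pisot_seq = pisotK m"
    using strict_mono_pisot_seq range_pisot_seq by simp
  show "f = pisot_seq" if "strict_mono f \<and> range f = pisotK m" for f
    using that strict_mono_range_unique[of f pisot_seq] strict_mono_pisot_seq range_pisot_seq by simp
qed

lemma FK_eq: "FK m = {1, \<gamma> + of_int \<lfloor>\<gamma>\<rfloor>, \<gamma> + of_int \<lfloor>\<gamma>\<rfloor> + 1}"
proof -
  have "FK m = range (\<lambda>n. pisot_seq (Suc n) - pisot_seq n)"
    by (auto simp: FK_def pisot_enum_eq)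
  also have "\<dots> = range (\<lambda>j. pisot_seq (Suc (2 * j)) - pisot_seq (2 * j)) \<union>
      range (\<lambda>j. pisot_seq (Suc (Suc (2 * j))) - pisot_seq (Suc (2 * j)))"
    by (rule range_even_odd)
  also have "\<dots> = {1} \<union> (\<lambda>d. \<gamma> + of_int d) ` range (\<lambda>j. \<lfloor>real (Suc (Suc j)) * \<gamma>\<rfloor> - \<lfloor>real (Suc j) * \<gamma>\<rfloor>)"
    unfolding pisot_seq_Suc_odd by (simp add: pisot_seq_Suc_even image_image)
  also have "range (\<lambda>j. \<lfloor>real (Suc (Suc j)) * \<gamma>\<rfloor> - \<lfloor>real (Suc j) * \<gamma>\<rfloor>) = {\<lfloor>\<gamma>\<rfloor>, \<lfloor>\<gamma>\<rfloor> + 1}"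
    by (rule range_floor_mult_diff[OF gamma_not_Int])
  finally show ?thesis
    by (auto simp: add.assoc)
qed

section \<open>The sets \<open>T\<^sub>K\<close> and \<open>U\<^sub>K\<close>\<close>

lemma int_omega_in_TK_iff:
  "of_int x + of_int y * \<omega> \<in> TK m \<longleftrightarrow> of_int x + of_int y * \<omega> > 2 \<and>
     - 2 < of_int x - of_int y * \<gamma> \<and> of_int x - of_int y * \<gamma> < 2 \<and> of_int x - of_int y * \<gamma> \<noteq> 0"
  unfolding TK_def mem_Collect_eq qconj_int_omega
  using int_omega_in_QK[of x y] alg_int_int_omega[of x y] by simp

lemma TK_least:
  assumes "sqrt_m > 3"
  shows "\<gamma> + of_int \<lfloor>\<gamma>\<rfloor> \<in> TK m" and "b \<in> TK m \<Longrightarrow> \<gamma> + of_int \<lfloor>\<gamma>\<rfloor> \<le> b"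
proof -
  have floor_\<gamma>: "of_int \<lfloor>\<gamma>\<rfloor> < \<gamma>" "\<gamma> < of_int \<lfloor>\<gamma>\<rfloor> + 1"
    using of_int_floor_less_if_not_Int[OF gamma_not_Int] by linarith+
  have "\<lfloor>\<gamma>\<rfloor> \<ge> 1"
    using assms by (simp add: le_floor_iff)
  have eq: "\<gamma> + of_int \<lfloor>\<gamma>\<rfloor> = of_int (\<lfloor>\<gamma>\<rfloor> - 1) + of_int 1 * \<omega>"
    by (simp add: field_simps)
  have conj_eq: "of_int (\<lfloor>\<gamma>\<rfloor> - 1) - of_int 1 * \<gamma> = of_int \<lfloor>\<gamma>\<rfloor> - 1 - \<gamma>"
    by simp
  have "2 < \<gamma> + of_int \<lfloor>\<gamma>\<rfloor>" and "- 2 < of_int \<lfloor>\<gamma>\<rfloor> - 1 - \<gamma>" and "of_int \<lfloor>\<gamma>\<rfloor> - 1 - \<gamma> < 0"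
    using floor_\<gamma> \<open>\<lfloor>\<gamma>\<rfloor> \<ge> 1\<close> assms by linarith+
  then show "\<gamma> + of_int \<lfloor>\<gamma>\<rfloor> \<in> TK m"
    unfolding eq int_omega_in_TK_iff conj_eq by (simp, linarith)
  assume "b \<in> TK m"
  then have "b \<in> QK m" "alg_int b"
    by (simp_all add: TK_def)
  then obtain x y where b: "b = of_int x + of_int y * \<omega>"
    by (metis alg_int_QK_imp_int_omega)
  with \<open>b \<in> TK m\<close> have "b > 2" and conj: "- 2 < of_int x - of_int y * \<gamma>" "of_int x - of_int y * \<gamma> < 2"
    by (simp_all only: int_omega_in_TK_iff)
  have b_minus_conj: "b - (of_int x - of_int y * \<gamma>) = of_int y * sqrt_m"
    by (simp add: b field_simps)
  then have "of_int y * sqrt_m > 0"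
    using \<open>b > 2\<close> conj by linarith
  then have "y \<ge> 1"
    using m_gt_1 by (simp add: zero_less_mult_iff)
  show "\<gamma> + of_int \<lfloor>\<gamma>\<rfloor> \<le> b"
  proof (cases "y = 1")
    case True
    then have "of_int x > \<gamma> - 2"
      using conj by simp
    then have "x \<ge> \<lfloor>\<gamma>\<rfloor> - 1"
      using floor_\<gamma> by linarith
    then show ?thesis
      using True by (simp add: b eq)
  next
    case False
    then have "of_int y * sqrt_m \<ge> 2 * sqrt_m"
      using \<open>y \<ge> 1\<close> m_gt_1 by (intro mult_right_mono) simp_all
    then have "b > 2 * sqrt_m - 2"
      using b_minus_conj conj(1) by linarith
    then show ?thesis
      using floor_\<gamma>(1) sqrt_m_gt_2 by argo
  qed
qed

lemma sqrt_m_lt_3_imp_m_eq_5: "sqrt_m < 3 \<Longrightarrow> m = 5"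
proof -
  assume "sqrt_m < 3"
  then have "real_of_int m < 9"
    using real_sqrt_less_iff[of "real_of_int m" 9] by simp
  then have "m < 9"
    by simp
  then show "m = 5"
    using m_ge_5 m_mod_4 by presburger
qed

lemma sqrt_m_gt_3_if_not_5:
  assumes "m \<noteq> 5"
  shows "sqrt_m > 3"
proof -
  have "m \<ge> 9"
    using assms m_ge_5 m_mod_4 by presburger
  then have "3 \<le> sqrt_m"
    by (intro real_le_rsqrt) simp
  moreover have "sqrt_m \<noteq> 3"
    using sqrt_m_irrational by auto
  ultimately show ?thesis
    by simp
qed

lemma int_omega_in_UKI:
  assumes "0 < of_int x + of_int y * \<omega>" and "n \<ge> 4" "1 \<le> k" "k \<le> n - 1" "coprime k n"
    and "of_int x + of_int y * \<omega> = 2 * cos (2 * real k * pi / real n)"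
  shows "of_int x + of_int y * \<omega> \<in> UK m"
  unfolding UK_def using assms int_omega_in_QK alg_int_int_omega by blast

lemma one_in_UK: "1 \<in> UK m"
proof -
  have "2 * cos (2 * real (1::nat) * pi / real (6::nat)) = 1"
    using cos_60 by simp
  then show ?thesis
    using int_omega_in_UKI[of 1 0 6 1] by simp
qed

lemma UK_bounds:
  assumes "x \<in> UK m"
  shows "x \<in> QK m" "alg_int x" "0 < x" "x < 2" "\<bar>qconj m x\<bar> \<le> 2"
proof -
  obtain n k :: nat where x: "x \<in> QK m" "alg_int x" "0 < x" and "n \<ge> 4" "1 \<le> k" "k \<le> n - 1"
    and x_cos: "x = 2 * cos (2 * real k * pi / real n)"
    using assms unfolding UK_def by blast
  then show "x \<in> QK m" "alg_int x" "0 < x"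
    by simp_all
  define t where "t = 2 * real k * pi / real n"
  have "real n * t = 2 * pi * of_int (int k)"
    using \<open>n \<ge> 4\<close> by (simp add: t_def)
  then have "dickson n x = 2"
    using dickson_2cos[of n t] x_cos t_def by (simp del: of_int_of_nat_eq)
  then have "dickson n (qconj m x) = 2"
    using dickson_QK[OF \<open>x \<in> QK m\<close>, of n] qconj_of_rat[of 2] by simp
  then show "\<bar>qconj m x\<bar> \<le> 2"
    using \<open>n \<ge> 4\<close> by (intro abs_le_2_if_dickson_eq_2) simp_all
  have "cos t \<noteq> 1"
  proof
    assume "cos t = 1"
    then obtain i :: int where "t = of_int i * 2 * pi"
      using cos_one_2pi_int by blast
    then have "real k = of_int i * real n"
      using \<open>n \<ge> 4\<close> by (simp add: t_def field_simps)
    moreover have "0 < real k" "real k < real n"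
      using \<open>1 \<le> k\<close> \<open>k \<le> n - 1\<close> \<open>n \<ge> 4\<close> by auto
    ultimately have "0 < i" "i < 1"
      by (auto simp: zero_less_mult_iff mult_less_cancel_right2)
    then show False
      by simp
  qed
  then have "cos t < 1"
    using cos_le_one[of t] by (simp add: order_less_le)
  then show "x < 2"
    using x_cos by (simp add: t_def)
qed

lemma int_omega_small_cases:
  assumes pos: "0 < of_int x + of_int y * \<omega>" and lt2: "of_int x + of_int y * \<omega> < 2"
    and conj: "\<bar>of_int x - of_int y * \<gamma>\<bar> \<le> 2"
  shows "(x = 1 \<and> y = 0) \<or> (m = 5 \<and> y = 1 \<and> (x = 0 \<or> x = -1))"
proof -
  have "of_int y * sqrt_m = (of_int x + of_int y * \<omega>) - (of_int x - of_int y * \<gamma>)"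
    by (simp add: field_simps)
  then have "\<bar>of_int y\<bar> * sqrt_m < 4"
    using pos lt2 conj m_gt_1 by (simp add: abs_mult)
  moreover have "2 * sqrt_m \<le> \<bar>of_int y\<bar> * sqrt_m" if "\<bar>y\<bar> \<ge> 2"
    using that m_gt_1 by (intro mult_right_mono) simp_all
  ultimately have "\<bar>y\<bar> < 2"
    using sqrt_m_gt_2 by fastforce
  then consider "y = 0" | "y = 1" | "y = -1"
    by linarith
  then show ?thesis
  proof cases
    case 1
    then show ?thesis
      using pos lt2 by simp
  next
    case 2
    then have "of_int x < 2 - \<omega>" and "of_int x \<ge> \<gamma> - 2"
      using lt2 conj by simp_all
    then have "real_of_int x < 1" and "real_of_int x > -2"
      using sqrt_m_gt_2 by argo+
    then have "x < 1" and "0 < real_of_int (x + 2)"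
      by simp_all
    then have "x = 0 \<or> x = -1"
      unfolding of_int_0_less_iff by linarith
    moreover from this have "sqrt_m \<le> 3"
      using \<open>of_int x < 2 - \<omega>\<close> \<open>of_int x \<ge> \<gamma> - 2\<close> by auto
    moreover have "sqrt_m \<noteq> 3"
      using sqrt_m_irrational by auto
    ultimately show ?thesis
      using 2 sqrt_m_lt_3_imp_m_eq_5 by simp
  next
    case 3
    have False
      using pos conj sqrt_m_gt_2 unfolding 3 by (simp add: abs_le_iff; argo)
    then show ?thesis ..
  qed
qed

lemma UK_cases:
  assumes "x \<in> UK m"
  shows "x = 1 \<or> (m = 5 \<and> (x = \<omega> \<or> x = \<omega> - 1))"
proof -
  obtain a b where x: "x = of_int a + of_int b * \<omega>"
    using UK_bounds[OF assms] alg_int_QK_imp_int_omega by metis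
  have "\<bar>of_int a - of_int b * \<gamma>\<bar> \<le> 2"
    using UK_bounds(5)[OF assms] unfolding x qconj_int_omega .
  then have "(a = 1 \<and> b = 0) \<or> (m = 5 \<and> b = 1 \<and> (a = 0 \<or> a = -1))"
    using UK_bounds(3,4)[OF assms] unfolding x by (rule int_omega_small_cases[rotated 2])
  then show ?thesis
    unfolding x by auto
qed

lemma UK_eq_if_not_5: "m \<noteq> 5 \<Longrightarrow> UK m = {1}"
  using UK_cases one_in_UK by blast

lemma gamma_plus_floor_gamma:
  "\<gamma> + of_int \<lfloor>\<gamma>\<rfloor> = (of_int \<lfloor>sqrt_m\<rfloor> + sqrt_m - (if even \<lfloor>sqrt_m\<rfloor> then 3 else 2)) / 2"
proof -
  define s where "s = \<lfloor>sqrt_m\<rfloor>"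
  have s: "of_int s \<le> sqrt_m" "sqrt_m < of_int s + 1"
    unfolding s_def by linarith+
  show ?thesis
  proof (cases "even s")
    case True
    then obtain j where "s = 2 * j"
      by (rule evenE)
    then have "\<lfloor>\<gamma>\<rfloor> = j - 1"
      using s by (simp add: floor_eq_iff)
    then show ?thesis
      using True \<open>s = 2 * j\<close> by (simp add: s_def [symmetric] field_simps)
  next
    case False
    then obtain j where "s = 2 * j + 1"
      by (rule oddE)
    then have "\<lfloor>\<gamma>\<rfloor> = j"
      using s by (simp add: floor_eq_iff)
    then show ?thesis
      using False \<open>s = 2 * j + 1\<close> by (simp add: s_def [symmetric] field_simps)
  qed
qed

lemma UK_FK_TK_if_not_5:
  assumes not_5: "m \<noteq> 5"
  defines "\<mu> \<equiv> \<gamma> + of_int \<lfloor>\<gamma>\<rfloor>"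
  shows "UK m = {1} \<and> UK m \<subset> FK m \<and> FK m = {1, \<mu>, 1 + \<mu>} \<and> \<mu> \<in> TK m \<and> (\<forall>b\<in>TK m. \<mu> \<le> b)"
proof -
  have "\<mu> \<in> TK m" and "\<forall>b\<in>TK m. \<mu> \<le> b"
    using TK_least[OF sqrt_m_gt_3_if_not_5[OF not_5]] unfolding \<mu>_def by blast+
  moreover from this have "\<mu> \<noteq> 1"
    by (auto simp: TK_def)
  moreover have "FK m = {1, \<mu>, 1 + \<mu>}"
    unfolding FK_eq \<mu>_def by (simp add: add.commute)
  ultimately show ?thesis
    using UK_eq_if_not_5[OF not_5] by (simp add: psubset_eq)
qed

end

lemma UK_FK_5:
  "UK 5 = {(-1 + sqrt 5) / 2, 1, (1 + sqrt 5) / 2}"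
  "FK 5 = {(-1 + sqrt 5) / 2, 1, (1 + sqrt 5) / 2}"
proof -
  interpret quadratic_field_1_mod_4 5
    by (intro quadratic_field_1_mod_4.intro quadratic_field.intro quadratic_field_1_mod_4_axioms.intro
        squarefree_5) simp_all
  have "of_int (-1) + of_int 1 * \<omega> \<in> UK 5"
  proof (rule int_omega_in_UKI[where n = 5 and k = 1])
    show "of_int (-1) + of_int 1 * \<omega> = 2 * cos (2 * real 1 * pi / real 5)"
      using cos_2pi_div_5 by (simp add: field_simps)
  qed (simp_all add: add_pos_nonneg)
  moreover have "of_int 0 + of_int 1 * \<omega> \<in> UK 5"
  proof (rule int_omega_in_UKI[where n = 10 and k = 1])
    show "of_int 0 + of_int 1 * \<omega> = 2 * cos (2 * real 1 * pi / real 10)"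
      using cos_pi_div_5 by (simp add: field_simps)
  qed (simp_all add: add_pos_nonneg)
  ultimately have "{\<omega> - 1, 1, \<omega>} \<subseteq> UK 5"
    using one_in_UK by (simp add: algebra_simps)
  moreover have "UK 5 \<subseteq> {\<omega> - 1, 1, \<omega>}"
    using UK_cases by blast
  ultimately have "UK 5 = {\<omega> - 1, 1, \<omega>}"
    by (rule antisym[rotated])
  also have "\<dots> = {(-1 + sqrt 5) / 2, 1, (1 + sqrt 5) / 2}"
    by (simp add: field_simps)
  finally show "UK 5 = {(-1 + sqrt 5) / 2, 1, (1 + sqrt 5) / 2}" .
  have "\<lfloor>\<gamma>\<rfloor> = 0"
    using sqrt_m_gt_2 sqrt_5_lt_3 by (simp add: floor_eq_iff)
  then show "FK 5 = {(-1 + sqrt 5) / 2, 1, (1 + sqrt 5) / 2}"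
    unfolding FK_eq by (auto simp: field_simps)
qed

theorem proposition2p2:
  fixes m :: int
  assumes "m \<ge> 5" and "squarefree m" and "m mod 4 = 1"
  defines "s \<equiv> \<lfloor>sqrt (real_of_int m)\<rfloor>"
  shows
    "(even s \<and> s > 2 \<longrightarrow>
        UK m = {1} \<and> UK m \<subset> FK m \<and>
        FK m = {1, (-3 + real_of_int s + sqrt (real_of_int m)) / 2,
                1 + (-3 + real_of_int s + sqrt (real_of_int m)) / 2} \<and>
        (-3 + real_of_int s + sqrt (real_of_int m)) / 2 \<in> TK m \<and> (\<forall>b\<in>TK m. (-3 + real_of_int s + sqrt (real_of_int m)) / 2 \<le> b))
   \<and> (m = 5 \<longrightarrow>
        UK m = {(-1 + sqrt 5) / 2, 1, (1 + sqrt 5) / 2} \<and>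
        FK m = {(-1 + sqrt 5) / 2, 1, (1 + sqrt 5) / 2} \<and>
        (-1 + sqrt 5) / 2 = 2 * cos (2 * pi / 5) \<and>
        (1 + sqrt 5) / 2 = 2 * cos (2 * pi / 10))
   \<and> (odd s \<longrightarrow>
        UK m = {1} \<and> UK m \<subset> FK m \<and>
        FK m = {1, (-2 + real_of_int s + sqrt (real_of_int m)) / 2,
                1 + (-2 + real_of_int s + sqrt (real_of_int m)) / 2} \<and>
        (-2 + real_of_int s + sqrt (real_of_int m)) / 2 \<in> TK m \<and> (\<forall>b\<in>TK m. (-2 + real_of_int s + sqrt (real_of_int m)) / 2 \<le> b))"
proof -
  interpret quadratic_field_1_mod_4 m
    using assms(1-3) by unfold_locales simp_all
  let "(_ \<longrightarrow> ?even_case) \<and> (_ \<longrightarrow> ?case_5) \<and> (_ \<longrightarrow> ?odd_case)" = ?thesis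
  have s_5: "m = 5 \<Longrightarrow> s = 2"
    unfolding s_def using sqrt_m_gt_2 sqrt_5_lt_3 by (simp add: floor_eq_iff)
  have \<mu>: "\<gamma> + of_int \<lfloor>\<gamma>\<rfloor> = (- (if even s then 3 else 2) + real_of_int s + sqrt_m) / 2"
    unfolding gamma_plus_floor_gamma s_def by simp
  have "?even_case" if "even s \<and> s > 2"
  proof -
    have "m \<noteq> 5" and eq: "(-3 + real_of_int s + sqrt_m) / 2 = \<gamma> + of_int \<lfloor>\<gamma>\<rfloor>"
      using that s_5 \<mu> by auto
    show ?thesis
      unfolding eq using \<open>m \<noteq> 5\<close> by (rule UK_FK_TK_if_not_5)
  qed
  moreover have "?odd_case" if "odd s"
  proof -
    have "m \<noteq> 5" and eq: "(-2 + real_of_int s + sqrt_m) / 2 = \<gamma> + of_int \<lfloor>\<gamma>\<rfloor>"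
      using that s_5 \<mu> by auto
    show ?thesis
      unfolding eq using \<open>m \<noteq> 5\<close> by (rule UK_FK_TK_if_not_5)
  qed
  moreover have "?case_5" if "m = 5"
    using that UK_FK_5 cos_2pi_div_5 cos_pi_div_5 by simp
  ultimately show ?thesis
    by blast
qed

end
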